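(* Let $X$ be a finite nonempty set and $p=2|X|-1$. Let $M(t,k)$ denote the set of elements of $\mathrm{FIM}(X)$ with $t$ trunk edges and $k$ branch edges. For $t\geq 1$ and $k\geq 0$, \[|M(t,k)|=(p+1)p^{t-1}R_{p,\,2p+(t-1)(p-1)}(k),\] and for $k\ge 0$, \[|M(0,k)|=\frac{p+1}{kp+p+1}\binom{kp+p+1}{k}.\] Consequently, for every integer $K\geq 0$, the sphere $S(K)$ of radius $K$ in $\mathrm{FIM}(X)$ satisfies \[|S(K)|=\varepsilon_K\cdot\frac{p+1}{\tfrac12Kp+p+1}\binom{\tfrac12Kp+p+1}{\tfrac12K}+\sum_{\substack{t+2k=K\\ t\ge1,\ k\ge0}}(p+1)p^{t-1}\frac{2p+(t-1)(p-1)}{kp+2p+(t-1)(p-1)}\binom{kp+2p+(t-1)(p-1)}{k},\] where $\varepsilon_K=1$ if $K$ is even and $\varepsilon_K=0$ if $K$ is odd.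
   Context: $\mathrm{FIM}(X)$ is the free inverse monoid on $X$, generated as a monoid by $X\cup X^{-1}$. Elements are identified (Munn's model) with pairs $(T,g)$, where $T$ is a finite connected subgraph, containing $1$, of the Cayley graph $\Gamma_X$ of the free group $\mathrm{FG}(X)$ with respect to $X$, and $g$ is a vertex of $T$. The trunk of $(T,g)$ is the geodesic in $T$ from $1$ to $g$. Branch edges are the edges of $T$ not on the trunk. The length of an element is the minimal length of a word over $X\cup X^{-1}$ representing it. $S(K)$ is the set of elements of length exactly $K$. $R_{p,q}(k)=\frac{q}{kp+q}\binom{kp+q}{k}$. *)

theory Defs
  imports Complex_Main
begin

text \<open>Letters of the alphabet X \<union> X^-1: (x, True) stands for x, (x, False) for x^-1.
Elements of the free group FG(X) are represented by freely reduced words.\<close>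

type_synonym 'a letter = "'a \<times> bool"

definition inv_letter :: "'a letter \<Rightarrow> 'a letter" where
  "inv_letter a = (fst a, \<not> snd a)"

fun red :: "'a letter list \<Rightarrow> 'a letter list" where
  "red [] = []"
| "red (a # w) = (case red w of [] \<Rightarrow> [a]
                   | b # r \<Rightarrow> (if b = inv_letter a then r else a # b # r))"

definition mult :: "'a letter list \<Rightarrow> 'a letter \<Rightarrow> 'a letter list" where
  "mult g a = red (g @ [a])"

text \<open>Edges of the Cayley graph Gamma_X: the edge (g, x) joins g and g x.\<close>
definition cayley_edges :: "'a set \<Rightarrow> ('a letter list \<times> 'a) set" where
  "cayley_edges X = {(g, x). g \<in> lists (X \<times> UNIV) \<and> red g = g \<and> x \<in> X}"

definition edge_of :: "'a letter list \<Rightarrow> 'a letter \<Rightarrow> 'a letter list \<times> 'a" where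
  "edge_of g a = (if snd a then (g, fst a) else (mult g a, fst a))"

definition walk_edges :: "'a letter list \<Rightarrow> ('a letter list \<times> 'a) set" where
  "walk_edges w = {edge_of (red (take i w)) (w ! i) | i. i < length w}"

definition verts :: "('a letter list \<times> 'a) set \<Rightarrow> 'a letter list set" where
  "verts E = insert [] (fst ` E \<union> (\<lambda>(g, x). mult g (x, True)) ` E)"

definition connected_from_one :: "('a letter list \<times> 'a) set \<Rightarrow> bool" where
  "connected_from_one E = (\<forall>v \<in> verts E. \<exists>w. walk_edges w \<subseteq> E \<and> red w = v)"

text \<open>Munn's model of FIM(X): pairs (T, g), T a finite connected subgraph of Gamma_X
containing 1 (given by its edge set; vertex set verts T), g a vertex of T.\<close>
definition FIM :: "'a set \<Rightarrow> (('a letter list \<times> 'a) set \<times> 'a letter list) set" where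
  "FIM X = {(T, g). finite T \<and> T \<subseteq> cayley_edges X \<and> connected_from_one T \<and> g \<in> verts T}"

text \<open>The element of FIM(X) represented by a word (Munn tree of the word).\<close>
definition munn :: "'a letter list \<Rightarrow> ('a letter list \<times> 'a) set \<times> 'a letter list" where
  "munn w = (walk_edges w, red w)"

definition fim_length :: "'a set \<Rightarrow> ('a letter list \<times> 'a) set \<times> 'a letter list \<Rightarrow> nat" where
  "fim_length X m = (LEAST n. \<exists>w \<in> lists (X \<times> UNIV). length w = n \<and> munn w = m)"

definition sphere :: "'a set \<Rightarrow> nat \<Rightarrow> (('a letter list \<times> 'a) set \<times> 'a letter list) set" where
  "sphere X K = {m \<in> FIM X. fim_length X m = K}"

definition tree_dist :: "('a letter list \<times> 'a) set \<Rightarrow> 'a letter list \<Rightarrow> nat" where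
  "tree_dist T g = (LEAST n. \<exists>w. length w = n \<and> walk_edges w \<subseteq> T \<and> red w = g)"

definition trunk :: "('a letter list \<times> 'a) set \<Rightarrow> 'a letter list \<Rightarrow> ('a letter list \<times> 'a) set" where
  "trunk T g = walk_edges (SOME w. length w = tree_dist T g \<and> walk_edges w \<subseteq> T \<and> red w = g)"

definition M :: "'a set \<Rightarrow> nat \<Rightarrow> nat \<Rightarrow> (('a letter list \<times> 'a) set \<times> 'a letter list) set" where
  "M X t k = {(T, g) \<in> FIM X. card (trunk T g) = t \<and> card (T - trunk T g) = k}"

definition R :: "nat \<Rightarrow> nat \<Rightarrow> nat \<Rightarrow> real" where
  "R p q k = real q / real (k * p + q) * real ((k * p + q) choose k)"

end

theory Submission
  imports Defs "HOL-Library.Sublist"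
begin

text \<open>An element \<open>(T, g)\<close> of \<open>FIM(X)\<close> is determined by the vertex set \<open>V\<close> of \<open>T\<close>, a finite
  prefix-closed set of reduced words containing \<open>g\<close>; its trunk consists of the parent edges of
  the prefixes of \<open>g\<close>. A walk from 1 to \<open>g\<close> covering \<open>T\<close> crosses each trunk edge an odd number
  of times and each branch edge an even, positive number of times, and a depth-first walk
  attains these bounds, so an element with \<open>t\<close> trunk and \<open>k\<close> branch edges has length \<open>t + 2k\<close>
  and \<open>S(K)\<close> is the disjoint union of the sets \<open>M(K - 2k, k)\<close>.

  For fixed \<open>g\<close> of length \<open>t\<close> the branch vertices form a forest grown from the
  \<open>r = 2|X| + t(2|X| - 2)\<close> free slots next to the trunk, each new vertex opening
  \<open>p = 2|X| - 1\<close> new slots. Deciding whether one given slot is used shows that the number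
  \<open>N(r, k)\<close> of such forests with \<open>k\<close> vertices satisfies
  \<open>N(r + 1, k + 1) = N(r, k + 1) + N(r + p, k)\<close>, the recursion of the Raney numbers
  \<open>R\<^sub>p\<^sub>,\<^sub>r(k)\<close>; finally there are \<open>(p + 1) p\<^sup>t\<^sup>-\<^sup>1\<close> reduced words of length \<open>t \<ge> 1\<close>.\<close>

section \<open>Free reduction\<close>

lemma prefix_length_eq: "prefix a b \<Longrightarrow> length a = length b \<Longrightarrow> a = b"
  by (auto simp: prefix_def)

lemma prefix_in_lists: "prefix c g \<Longrightarrow> g \<in> lists A \<Longrightarrow> c \<in> lists A"
  by (auto simp: prefix_def)

lemma prefix_butlast_if_neq: "prefix x y \<Longrightarrow> x \<noteq> y \<Longrightarrow> prefix x (butlast y)"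
  by (cases y rule: rev_cases) auto

lemma inv_letter_inv_letter [simp]: "inv_letter (inv_letter a) = a"
  by (simp add: inv_letter_def)

lemma inv_letter_neq [simp]: "inv_letter a \<noteq> a" "a \<noteq> inv_letter a"
  by (auto simp: inv_letter_def prod_eq_iff)

lemma inv_letter_eq_iff [simp]: "inv_letter a = inv_letter b \<longleftrightarrow> a = b"
  by (metis inv_letter_inv_letter)

lemma inv_letter_eq_swap: "inv_letter a = b \<longleftrightarrow> a = inv_letter b"
  by auto

fun reduced :: "'a letter list \<Rightarrow> bool" where
  "reduced [] = True"
| "reduced [a] = True"
| "reduced (a # b # w) = (b \<noteq> inv_letter a \<and> reduced (b # w))"

lemma reduced_Cons: "reduced (a # w) \<longleftrightarrow> reduced w \<and> (w \<noteq> [] \<longrightarrow> hd w \<noteq> inv_letter a)"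
  by (cases w) auto

lemma reduced_append:
  "reduced (u @ v) \<longleftrightarrow> reduced u \<and> reduced v \<and> (u \<noteq> [] \<longrightarrow> v \<noteq> [] \<longrightarrow> hd v \<noteq> inv_letter (last u))"
  by (induction u) (auto simp: reduced_Cons)

lemma reduced_snoc: "reduced (u @ [a]) \<longleftrightarrow> reduced u \<and> (u \<noteq> [] \<longrightarrow> last u \<noteq> inv_letter a)"
  by (auto simp: reduced_append inv_letter_eq_swap)

lemma reduced_butlast: "reduced u \<Longrightarrow> reduced (butlast u)"
  by (metis append_butlast_last_id butlast.simps(1) reduced_append)

lemma reduced_prefix: "reduced u \<Longrightarrow> prefix c u \<Longrightarrow> reduced c"
  by (auto simp: prefix_def reduced_append)

lemma reduced_red: "reduced (red w)"
  by (induction w) (auto split: list.splits simp: reduced_Cons)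

lemma red_reduced: "reduced w \<Longrightarrow> red w = w"
  by (induction w) (auto split: list.splits simp: reduced_Cons)

lemma red_idem [simp]: "red (red w) = red w"
  by (simp add: reduced_red red_reduced)

lemma red_eq_self_iff: "red w = w \<longleftrightarrow> reduced w"
  by (metis reduced_red red_reduced)

lemma length_red: "red w = w \<or> length (red w) + 2 \<le> length w"
  by (induction w) (auto split: list.splits if_splits)

lemma length_red_le: "length (red w) \<le> length w"
  using length_red[of w] by auto

definition free_mult :: "'a letter list \<Rightarrow> 'a letter \<Rightarrow> 'a letter list" where
  "free_mult r a = (if r \<noteq> [] \<and> last r = inv_letter a then butlast r else r @ [a])"

lemma reduced_free_mult: "reduced r \<Longrightarrow> reduced (free_mult r a)"
  by (auto simp: free_mult_def reduced_snoc reduced_butlast)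

lemma free_mult_inv: "reduced r \<Longrightarrow> free_mult (free_mult r a) (inv_letter a) = r"
  by (cases r rule: rev_cases) (auto simp: free_mult_def reduced_snoc butlast_append)

lemma free_mult_lists: "r \<in> lists A \<Longrightarrow> a \<in> A \<Longrightarrow> free_mult r a \<in> lists A"
  unfolding free_mult_def in_lists_conv_set by (auto dest: in_set_butlastD)

lemma red_snoc: "red (w @ [a]) = free_mult (red w) a"
proof (induction w)
  case (Cons b w)
  then show ?case
    using reduced_red[of w]
    by (cases "red w" rule: rev_cases) (auto simp: free_mult_def split: list.splits)
qed (simp add: free_mult_def)

lemma red_append_red: "red (red u @ v) = red (u @ v)"
  by (induction v rule: rev_induct) (simp, metis append_assoc red_snoc)

lemma mult_reduced: "reduced r \<Longrightarrow> mult r a = free_mult r a"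
  by (simp add: mult_def red_snoc red_reduced)

section \<open>Munn trees as prefix-closed sets of reduced words\<close>

definition parent_edge :: "'a letter list \<Rightarrow> 'a letter list \<times> 'a" where
  "parent_edge c = edge_of (butlast c) (last c)"

definition edge_ends :: "'a letter list \<times> 'a \<Rightarrow> 'a letter list set" where
  "edge_ends e = {fst e, mult (fst e) (snd e, True)}"

lemma parent_edge_snoc [simp]: "parent_edge (u @ [a]) = edge_of u a"
  by (simp add: parent_edge_def)

lemma parent_edge_snoc_reduced:
  "reduced (u @ [a]) \<Longrightarrow> parent_edge (u @ [a]) = (if snd a then (u, fst a) else (u @ [a], fst a))"
  by (auto simp: edge_of_def mult_reduced reduced_snoc free_mult_def)

lemma parent_edge_inj:
  assumes "reduced c" "reduced c'" "c \<noteq> []" "c' \<noteq> []" "parent_edge c = parent_edge c'"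
  shows "c = c'"
proof -
  obtain u a u' a' where c: "c = u @ [a]" and c': "c' = u' @ [a']"
    using assms(3,4) by (metis rev_exhaust)
  have e: "parent_edge c = (if snd a then (u, fst a) else (c, fst a))"
    "parent_edge c' = (if snd a' then (u', fst a') else (c', fst a'))"
    using assms(1,2) c c' parent_edge_snoc_reduced by metis+
  have inv: "a = inv_letter a'" if "fst a = fst a'" "snd a \<noteq> snd a'"
    using that by (auto simp: inv_letter_def prod_eq_iff)
  consider "snd a = snd a'" | "snd a" "\<not> snd a'" | "\<not> snd a" "snd a'" by blast
  then show ?thesis
  proof cases
    case 1
    then show ?thesis using assms(5) e c c' by (auto simp: prod_eq_iff split: if_splits)
  next
    case 2
    then have "u = u' @ [a']" "a = inv_letter a'" using assms(5) e c' inv by auto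
    then show ?thesis using assms(1) c by (simp add: reduced_append)
  next
    case 3
    then have "u' = u @ [a]" "a' = inv_letter a" using assms(5) e c inv by auto
    then show ?thesis using assms(2) c' by (simp add: reduced_append)
  qed
qed

lemma inj_on_parent_edge: "\<forall>v\<in>V. reduced v \<Longrightarrow> inj_on parent_edge (V - {[]})"
  by (rule inj_onI) (auto intro: parent_edge_inj)

lemma edge_ends_edge_of: "reduced r \<Longrightarrow> edge_ends (edge_of r a) = {r, free_mult r a}"
proof (cases "snd a")
  case False
  then have "(fst a, True) = inv_letter a" by (simp add: inv_letter_def prod_eq_iff)
  then show "reduced r \<Longrightarrow> ?thesis"
    using False by (auto simp: edge_ends_def edge_of_def mult_reduced free_mult_inv reduced_free_mult)
qed (simp add: edge_ends_def edge_of_def mult_reduced, metis prod.collapse)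

lemma edge_ends_parent_edge:
  assumes "reduced c" "c \<noteq> []"
  shows "edge_ends (parent_edge c) = {butlast c, c}"
proof -
  obtain u a where c: "c = u @ [a]" using assms(2) by (metis rev_exhaust)
  then have "reduced u" "free_mult u a = c"
    using assms(1) by (auto simp: reduced_snoc free_mult_def)
  then show ?thesis using c by (simp add: edge_ends_edge_of)
qed

text \<open>A step of a walk crosses the parent edge of \<open>c\<close> exactly when it enters or leaves
  the subtree below \<open>c\<close>.\<close>
lemma edge_of_eq_parent_edge_iff:
  assumes r: "reduced r" and c: "reduced c" "c \<noteq> []"
  shows "edge_of r a = parent_edge c \<longleftrightarrow> prefix c (free_mult r a) \<noteq> prefix c r"
proof (cases "r \<noteq> [] \<and> last r = inv_letter a")
  case True
  then obtain r' where r': "r = r' @ [inv_letter a]" by (metis append_butlast_last_id)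
  have "mult r a = r'"
    using r r' by (simp add: mult_reduced free_mult_def)
  then have "edge_of r a = parent_edge r"
    using parent_edge_snoc_reduced[of r' "inv_letter a"] r r'
    by (auto simp: edge_of_def inv_letter_def)
  then have "edge_of r a = parent_edge c \<longleftrightarrow> c = r"
    using parent_edge_inj[OF c(1) r] c r' by auto
  then show ?thesis using True r' prefix_length_le[of "r' @ [inv_letter a]" r']
    by (auto simp: free_mult_def)
next
  case False
  then have ms: "free_mult r a = r @ [a]" and ra: "reduced (r @ [a])"
    using r by (auto simp: free_mult_def reduced_snoc)
  have "edge_of r a = parent_edge c \<longleftrightarrow> c = r @ [a]"
    using parent_edge_inj[OF c(1) ra] c parent_edge_snoc[of r a] by auto
  then show ?thesis using ms prefix_length_le[of "r @ [a]" r] by auto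
qed

lemma walk_edges_image: "walk_edges w = (\<lambda>i. edge_of (red (take i w)) (w ! i)) ` {..<length w}"
  unfolding walk_edges_def by blast

lemma walk_edges_snoc: "walk_edges (w @ [a]) = insert (edge_of (red w) a) (walk_edges w)"
proof -
  have "(\<lambda>i. edge_of (red (take i (w @ [a]))) ((w @ [a]) ! i)) ` {..<length w}
      = (\<lambda>i. edge_of (red (take i w)) (w ! i)) ` {..<length w}"
    by (rule image_cong) (auto simp: nth_append)
  moreover have "{..<length (w @ [a])} = insert (length w) {..<length w}" by auto
  ultimately show ?thesis unfolding walk_edges_image by simp
qed

lemma walk_edges_append:
  "walk_edges (x @ y) = walk_edges x \<union> (\<lambda>i. edge_of (red (x @ take i y)) (y ! i)) ` {..<length y}"
proof (induction y rule: rev_induct)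
  case (snoc a y)
  have "(\<lambda>i. edge_of (red (x @ take i (y @ [a]))) ((y @ [a]) ! i)) ` {..<length y}
      = (\<lambda>i. edge_of (red (x @ take i y)) (y ! i)) ` {..<length y}"
    by (rule image_cong) (auto simp: nth_append)
  moreover have "{..<length (y @ [a])} = insert (length y) {..<length y}" by auto
  moreover have "walk_edges (x @ y @ [a]) = insert (edge_of (red (x @ y)) a) (walk_edges (x @ y))"
    using walk_edges_snoc[of "x @ y" a] by simp
  ultimately show ?case using snoc.IH by simp
qed simp

lemma parent_edge_in_walk_edges: "prefix c (red w) \<Longrightarrow> c \<noteq> [] \<Longrightarrow> parent_edge c \<in> walk_edges w"
proof (induction w rule: rev_induct)
  case (snoc a w)
  then have "reduced c" using reduced_prefix reduced_red by blast
  then show ?case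
    using snoc edge_of_eq_parent_edge_iff[OF reduced_red, of c w a]
    by (cases "prefix c (red w)") (auto simp: walk_edges_snoc red_snoc)
qed simp

lemma walk_edges_reduced: "reduced g \<Longrightarrow> walk_edges g = parent_edge ` (set (prefixes g) - {[]})"
proof (induction g rule: rev_induct)
  case (snoc a g)
  then have "reduced g" by (simp add: reduced_append)
  then have "walk_edges (g @ [a]) = insert (edge_of g a) (walk_edges g)"
    using walk_edges_snoc[of g a] red_reduced[of g] by simp
  then show ?case using snoc.IH \<open>reduced g\<close> by (simp add: insert_Diff_if)
qed (simp add: walk_edges_def)

text \<open>A finite subtree of \<open>\<Gamma>\<^sub>X\<close> containing 1 is determined by its vertex set, and the vertex
  sets that occur are exactly the finite prefix-closed sets of reduced words; the edges are
  the parent edges of the vertices other than 1.\<close>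
definition prefix_closed :: "'a set \<Rightarrow> 'a letter list set \<Rightarrow> bool" where
  "prefix_closed X V \<longleftrightarrow>
     finite V \<and> [] \<in> V \<and> (\<forall>v\<in>V. reduced v \<and> v \<in> lists (X \<times> UNIV) \<and> butlast v \<in> V)"

definition tree_edges :: "'a letter list set \<Rightarrow> ('a letter list \<times> 'a) set" where
  "tree_edges V = parent_edge ` (V - {[]})"

lemma prefix_closed_prefixes:
  assumes "prefix_closed X V" "v \<in> V"
  shows "set (prefixes v) \<subseteq> V"
  using assms(2)
proof (induction v rule: rev_induct)
  case (snoc a v)
  then have "v \<in> V" using assms(1) unfolding prefix_closed_def by (metis butlast_snoc)
  then show ?case using snoc by auto
qed (use assms(1) in \<open>simp add: prefix_closed_def\<close>)

lemma card_prefix_closed_ge: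
  assumes "prefix_closed X V" "g \<in> V"
  shows "Suc (length g) \<le> card V"
proof -
  have "card (set (prefixes g)) \<le> card V"
    using assms prefix_closed_prefixes by (intro card_mono) (auto simp: prefix_closed_def)
  then show ?thesis by simp
qed

lemma verts_eq_edge_ends: "verts E = insert [] (\<Union> (edge_ends ` E))"
  unfolding verts_def edge_ends_def by (auto simp: case_prod_beta)

lemma verts_tree_edges: "prefix_closed X V \<Longrightarrow> verts (tree_edges V) = V"
  unfolding verts_eq_edge_ends tree_edges_def prefix_closed_def
  by (auto simp: edge_ends_parent_edge)

lemma walk_edges_subset_tree_edges:
  assumes "prefix_closed X V" "v \<in> V"
  shows "walk_edges v \<subseteq> tree_edges V"
proof -
  have "reduced v" using assms by (simp add: prefix_closed_def)
  then show ?thesis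
    using walk_edges_reduced prefix_closed_prefixes[OF assms] unfolding tree_edges_def by blast
qed

lemma parent_edge_cayley:
  assumes "reduced c" "c \<noteq> []" "c \<in> lists (X \<times> UNIV)"
  shows "parent_edge c \<in> cayley_edges X"
proof -
  obtain u a where c: "c = u @ [a]" using assms(2) by (metis rev_exhaust)
  have "reduced u" using assms(1) c by (simp add: reduced_snoc)
  moreover have "parent_edge c = (if snd a then (u, fst a) else (c, fst a))"
    using assms(1) c parent_edge_snoc_reduced by metis
  ultimately show ?thesis using assms c by (auto simp: cayley_edges_def red_reduced)
qed

lemma tree_edges_in_FIM:
  assumes V: "prefix_closed X V" and "g \<in> V"
  shows "(tree_edges V, g) \<in> FIM X"
proof -
  have "tree_edges V \<subseteq> cayley_edges X"
    using V by (auto simp: prefix_closed_def tree_edges_def intro!: parent_edge_cayley)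
  moreover have "connected_from_one (tree_edges V)"
    unfolding connected_from_one_def verts_tree_edges[OF V]
    using walk_edges_subset_tree_edges[OF V] red_reduced V by (metis prefix_closed_def)
  moreover have "finite (tree_edges V)" using V by (simp add: prefix_closed_def tree_edges_def)
  ultimately show ?thesis using \<open>g \<in> V\<close> by (simp add: FIM_def verts_tree_edges[OF V])
qed

lemma edge_ends_cayley:
  assumes "e \<in> cayley_edges X" "v \<in> edge_ends e"
  shows "reduced v \<and> v \<in> lists (X \<times> UNIV)"
proof -
  obtain h x where e: "e = (h, x)" and h: "reduced h" "h \<in> lists (X \<times> UNIV)" "x \<in> X"
    using assms(1) by (auto simp: cayley_edges_def red_eq_self_iff)
  then show ?thesis
    using assms(2) free_mult_lists[OF h(2), of "(x, True)"]
    by (auto simp: edge_ends_def mult_reduced reduced_free_mult)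
qed

lemma cayley_edge_eq_parent_edge:
  assumes "e \<in> cayley_edges X"
  obtains c where "c \<in> edge_ends e" "c \<noteq> []" "e = parent_edge c"
proof -
  obtain h x where e: "e = (h, x)" and h: "reduced h"
    using assms by (auto simp: cayley_edges_def red_eq_self_iff)
  show ?thesis
  proof (cases "h \<noteq> [] \<and> last h = (x, False)")
    case True
    then obtain h' where "h = h' @ [(x, False)]" by (metis append_butlast_last_id)
    then show ?thesis
      using that[of h] h e parent_edge_snoc_reduced[of h' "(x, False)"] by (simp add: edge_ends_def)
  next
    case False
    then have "mult h (x, True) = h @ [(x, True)]" "reduced (h @ [(x, True)])"
      using h by (auto simp: mult_reduced free_mult_def reduced_snoc inv_letter_def)
    then show ?thesis
      using that[of "h @ [(x, True)]"] e parent_edge_snoc_reduced[of h "(x, True)"]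
      by (simp add: edge_ends_def)
  qed
qed

lemma FIM_prefix_closed_verts:
  assumes "(T, g) \<in> FIM X"
  shows "prefix_closed X (verts T)"
proof -
  have T: "finite T" "T \<subseteq> cayley_edges X" "connected_from_one T"
    using assms by (auto simp: FIM_def)
  have vert: "reduced v \<and> v \<in> lists (X \<times> UNIV)" if "v \<in> verts T" for v
  proof -
    have "v = [] \<or> (\<exists>e\<in>T. v \<in> edge_ends e)" using that unfolding verts_eq_edge_ends by blast
    then show ?thesis using T(2) edge_ends_cayley by fastforce
  qed
  have "butlast v \<in> verts T" if v: "v \<in> verts T" and "butlast v \<noteq> []" for v
  proof -
    obtain w where w: "walk_edges w \<subseteq> T" "red w = v"
      using T(3) v by (auto simp: connected_from_one_def)
    then have "parent_edge (butlast v) \<in> T"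
      using parent_edge_in_walk_edges[of "butlast v" w] \<open>butlast v \<noteq> []\<close> prefixeq_butlast by blast
    moreover have "butlast v \<in> edge_ends (parent_edge (butlast v))"
      using edge_ends_parent_edge reduced_butlast vert[OF v] \<open>butlast v \<noteq> []\<close> by blast
    ultimately show ?thesis unfolding verts_eq_edge_ends by blast
  qed
  then show ?thesis
    using T(1) vert by (auto simp: prefix_closed_def verts_def)
qed

lemma FIM_eq_tree_edges_verts:
  assumes "(T, g) \<in> FIM X"
  shows "T = tree_edges (verts T)"
proof
  have T: "T \<subseteq> cayley_edges X" "connected_from_one T"
    using assms by (auto simp: FIM_def)
  show "T \<subseteq> tree_edges (verts T)"
  proof
    fix e assume "e \<in> T"
    then obtain c where "c \<in> edge_ends e" "c \<noteq> []" "e = parent_edge c"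
      using T(1) cayley_edge_eq_parent_edge by blast
    then show "e \<in> tree_edges (verts T)"
      using \<open>e \<in> T\<close> unfolding tree_edges_def verts_eq_edge_ends by blast
  qed
  show "tree_edges (verts T) \<subseteq> T"
    using T(2) parent_edge_in_walk_edges
    by (fastforce simp: tree_edges_def connected_from_one_def)
qed

lemma FIM_eq_image_tree_edges:
  "FIM X = (\<lambda>(V, g). (tree_edges V, g)) ` {(V, g). prefix_closed X V \<and> g \<in> V}"
proof (intro set_eqI iffI)
  fix m assume m: "m \<in> FIM X"
  obtain T g where "m = (T, g)" by fastforce
  with m have "prefix_closed X (verts T)" "T = tree_edges (verts T)" "g \<in> verts T"
    using FIM_prefix_closed_verts FIM_eq_tree_edges_verts by (blast, blast, simp add: FIM_def)
  with \<open>m = (T, g)\<close> show "m \<in> (\<lambda>(V, g). (tree_edges V, g)) ` {(V, g). prefix_closed X V \<and> g \<in> V}"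
    by (auto intro!: image_eqI[where x = "(verts T, g)"])
qed (auto intro: tree_edges_in_FIM)

lemma inj_on_tree_edges:
  "inj_on (\<lambda>(V, g). (tree_edges V, g)) {(V, g). prefix_closed X V \<and> g \<in> V}"
  by (rule inj_onI) (clarsimp, metis verts_tree_edges)

section \<open>Trunk and length\<close>

lemma trunk_tree_edges:
  assumes V: "prefix_closed X V" and g: "g \<in> V"
  shows "trunk (tree_edges V) g = walk_edges g"
proof -
  have rg: "reduced g" using V g by (simp add: prefix_closed_def)
  let ?P = "\<lambda>w. length w = tree_dist (tree_edges V) g \<and> walk_edges w \<subseteq> tree_edges V \<and> red w = g"
  have "tree_dist (tree_edges V) g = length g"
    unfolding tree_dist_def
    by (rule Least_equality)
      (use walk_edges_subset_tree_edges[OF V g] red_reduced[OF rg] length_red_le in auto)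
  then have "?P g" using walk_edges_subset_tree_edges[OF V g] red_reduced[OF rg] by simp
  then have "?P (SOME w. ?P w)" by (rule someI)
  \<comment> \<open>a word of length \<open>|g|\<close> reducing to \<open>g\<close> is \<open>g\<close> itself\<close>
  then have "(SOME w. ?P w) = g"
    using length_red[of "SOME w. ?P w"] \<open>tree_dist (tree_edges V) g = length g\<close> by auto
  then show ?thesis unfolding trunk_def by simp
qed

lemma card_trunk:
  assumes V: "prefix_closed X V" and g: "g \<in> V"
  shows "card (trunk (tree_edges V) g) = length g"
    and "card (tree_edges V - trunk (tree_edges V) g) = card V - 1 - length g"
proof -
  have rg: "reduced g" and fin: "finite V" using V g by (auto simp: prefix_closed_def)
  have inj: "inj_on parent_edge (V - {[]})"
    using V by (auto simp: prefix_closed_def intro!: inj_on_parent_edge)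
  have PV: "set (prefixes g) - {[]} \<subseteq> V - {[]}" using prefix_closed_prefixes[OF V g] by blast
  have trunk: "trunk (tree_edges V) g = parent_edge ` (set (prefixes g) - {[]})"
    using trunk_tree_edges[OF V g] walk_edges_reduced[OF rg] by simp
  show "card (trunk (tree_edges V) g) = length g"
    unfolding trunk using card_image[OF inj_on_subset[OF inj PV]] by simp
  have "tree_edges V - trunk (tree_edges V) g = parent_edge ` ((V - {[]}) - (set (prefixes g) - {[]}))"
    unfolding trunk by (simp add: tree_edges_def inj_on_image_set_diff[OF inj _ PV])
  also have "card \<dots> = card (V - {[]}) - card (set (prefixes g) - {[]})"
    using card_image[OF inj_on_subset[OF inj]] card_Diff_subset[OF _ PV] fin
    by (simp add: finite_subset[OF PV])
  finally show "card (tree_edges V - trunk (tree_edges V) g) = card V - 1 - length g"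
    using V fin by (simp add: prefix_closed_def)
qed

definition traversals :: "'a letter list \<Rightarrow> 'a letter list \<times> 'a \<Rightarrow> nat" where
  "traversals w e = card {i. i < length w \<and> edge_of (red (take i w)) (w ! i) = e}"

lemma traversals_snoc:
  "traversals (w @ [a]) e = traversals w e + (if edge_of (red w) a = e then 1 else 0)"
proof -
  have "{i. i < length (w @ [a]) \<and> edge_of (red (take i (w @ [a]))) ((w @ [a]) ! i) = e}
      = {i. i < length w \<and> edge_of (red (take i w)) (w ! i) = e}
        \<union> (if edge_of (red w) a = e then {length w} else {})"
    by (auto simp: nth_append less_Suc_eq)
  then show ?thesis unfolding traversals_def by (simp add: card_insert_if)
qed

lemma odd_traversals_iff:
  "reduced c \<Longrightarrow> c \<noteq> [] \<Longrightarrow> odd (traversals w (parent_edge c)) \<longleftrightarrow> prefix c (red w)"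
proof (induction w rule: rev_induct)
  case (snoc a w)
  then show ?case
    using edge_of_eq_parent_edge_iff[OF reduced_red snoc.prems, of w a]
    by (auto simp: traversals_snoc red_snoc)
qed (simp add: traversals_def)

lemma traversals_pos: "e \<in> walk_edges w \<Longrightarrow> 0 < traversals w e"
  unfolding walk_edges_def traversals_def by (auto simp: card_gt_0_iff)

lemma sum_traversals_le: "(\<Sum>e\<in>E. traversals w e) \<le> length w"
proof (cases "finite E")
  case True
  have "(\<Sum>e\<in>E. traversals w e) = card (\<Union>e\<in>E. {i. i < length w \<and> edge_of (red (take i w)) (w ! i) = e})"
    unfolding traversals_def using True by (subst card_UN_disjoint) auto
  also have "\<dots> \<le> card {..<length w}" by (rule card_mono) auto
  finally show ?thesis by simp
qed simp

text \<open>Each edge of the Munn tree is traversed at least once, and an even number of times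
  unless it lies on the trunk.\<close>
lemma length_walk_ge:
  assumes V: "prefix_closed X V" and g: "g \<in> V"
    and w: "walk_edges w = tree_edges V" "red w = g"
  shows "length g + 2 * (card V - 1 - length g) \<le> length w"
proof -
  have fin: "finite V" and PV: "set (prefixes g) \<subseteq> V"
    using V prefix_closed_prefixes[OF V g] by (auto simp: prefix_closed_def)
  have inj: "inj_on parent_edge (V - {[]})"
    using V by (auto simp: prefix_closed_def intro!: inj_on_parent_edge)
  have ge: "(if prefix c g then 1 else 2) \<le> traversals w (parent_edge c)" if c: "c \<in> V - {[]}" for c
  proof -
    have "reduced c" using V c by (simp add: prefix_closed_def)
    then have "odd (traversals w (parent_edge c)) \<longleftrightarrow> prefix c g"
      using odd_traversals_iff[of c w] c w(2) by auto
    moreover have "0 < traversals w (parent_edge c)"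
      using c w(1) traversals_pos unfolding tree_edges_def by blast
    ultimately show ?thesis by (cases "prefix c g") (auto elim: oddE)
  qed
  have split: "V - {[]} = (set (prefixes g) - {[]}) \<union> (V - set (prefixes g))" using PV by auto
  have "length g + 2 * (card V - 1 - length g)
      = (\<Sum>c\<in>V - {[]}. if prefix c g then 1 else 2::nat)"
    unfolding split using fin PV
    by (subst sum.union_disjoint) (auto simp: card_Diff_subset finite_subset)
  also have "\<dots> \<le> (\<Sum>c\<in>V - {[]}. traversals w (parent_edge c))"
    by (rule sum_mono) (rule ge)
  also have "\<dots> = (\<Sum>e\<in>tree_edges V. traversals w e)"
    unfolding tree_edges_def by (simp add: sum.reindex[OF inj])
  also have "\<dots> \<le> length w" by (rule sum_traversals_le)
  finally show ?thesis .
qed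

lemma visits_verts_walk_edges:
  assumes "v \<in> verts (walk_edges w)"
  obtains i where "i \<le> length w" "red (take i w) = v"
proof -
  consider "v = []" | i where "i < length w" "v \<in> edge_ends (edge_of (red (take i w)) (w ! i))"
    using assms unfolding verts_eq_edge_ends walk_edges_def by blast
  then show ?thesis
  proof cases
    case 1
    then show ?thesis using that[of 0] by simp
  next
    case 2
    then have "v = red (take i w) \<or> v = red (take (Suc i) w)"
      by (simp add: edge_ends_edge_of[OF reduced_red] take_Suc_conv_app_nth red_snoc)
    then show ?thesis using that 2(1) by (metis Suc_leI less_imp_le)
  qed
qed

lemma walk_detour:
  assumes u: "red (take i w) = u" and ua: "reduced (u @ [a])"
  defines "w' \<equiv> take i w @ [a, inv_letter a] @ drop i w"
  shows "red w' = red w" "walk_edges w' = insert (parent_edge (u @ [a])) (walk_edges w)"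
    and "length w' = length w + 2"
proof -
  let ?x = "take i w" and ?y = "drop i w"
  have "reduced u" using ua by (simp add: reduced_snoc)
  have xa: "red (?x @ [a]) = u @ [a]"
    using u ua by (auto simp: red_snoc free_mult_def reduced_snoc)
  have xaa: "red (?x @ [a, inv_letter a]) = u"
    using red_snoc[of "?x @ [a]" "inv_letter a"] xa free_mult_inv[OF \<open>reduced u\<close>, of a] ua
    by (simp add: free_mult_def reduced_snoc)
  have cancel: "red (?x @ a # inv_letter a # z) = red (?x @ z)" for z
    by (metis red_append_red xaa u append.assoc append_Cons append_Nil)
  show "red w' = red w" using cancel[of ?y] by (simp add: w'_def)
  show "length w' = length w + 2" by (simp add: w'_def)
  have return_edge: "edge_of (u @ [a]) (inv_letter a) = parent_edge (u @ [a])"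
    using edge_of_eq_parent_edge_iff[OF ua ua] xaa xa red_snoc[of "?x @ [a]" "inv_letter a"]
    by (simp add: prefix_length_le)
  have "walk_edges (?x @ [a, inv_letter a]) = insert (parent_edge (u @ [a])) (walk_edges ?x)"
    using walk_edges_snoc[of "?x @ [a]" "inv_letter a"] walk_edges_snoc[of ?x a] xa u return_edge
    by simp
  then show "walk_edges w' = insert (parent_edge (u @ [a])) (walk_edges w)"
    using walk_edges_append[of "?x @ [a, inv_letter a]" ?y] walk_edges_append[of ?x ?y]
    unfolding w'_def by (simp add: cancel)
qed

lemma prefix_closed_Diff_leaf:
  assumes V: "prefix_closed X V" and v: "v \<noteq> []" "\<forall>u\<in>V. butlast u \<noteq> v"
  shows "prefix_closed X (V - {v})"
  using assms unfolding prefix_closed_def by auto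

lemma leaf_off_trunk:
  assumes V: "prefix_closed X V" and "\<not> V \<subseteq> set (prefixes g)"
  obtains v where "v \<in> V" "\<not> prefix v g" "\<forall>u\<in>V. butlast u \<noteq> v"
proof -
  \<comment> \<open>a longest vertex off the trunk\<close>
  let ?S = "V - set (prefixes g)"
  have S: "finite ?S" "?S \<noteq> {}" using assms by (auto simp: prefix_closed_def)
  have "Max (length ` ?S) \<in> length ` ?S" using S by (intro Max_in) auto
  then obtain v where v: "v \<in> ?S" "length v = Max (length ` ?S)" by auto
  then have v_max: "length u \<le> length v" if "u \<in> ?S" for u
    using that S(1) by simp
  have "butlast u \<noteq> v" if "u \<in> V" for u
  proof
    assume u: "butlast u = v"
    then have "\<not> prefix u g" using v(1) prefixeq_butlast[of u] prefix_order.trans by auto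
    then have "length u \<le> length v" using v_max[of u] that by auto
    moreover have "u \<noteq> []" using u v(1) by auto
    then have "length v < length u" using u by auto
    ultimately show False by simp
  qed
  then show ?thesis using that v(1) by auto
qed

lemma walk_add_leaf:
  assumes V: "prefix_closed X V" and v: "v \<in> V" "v \<noteq> []" "\<forall>u\<in>V. butlast u \<noteq> v"
    and w: "w \<in> lists (X \<times> UNIV)" "walk_edges w = tree_edges (V - {v})"
  obtains w' where "w' \<in> lists (X \<times> UNIV)" "walk_edges w' = tree_edges V"
    "red w' = red w" "length w' = length w + 2"
proof -
  obtain u a where vua: "v = u @ [a]" using v(2) by (metis rev_exhaust)
  have V': "prefix_closed X (V - {v})" by (rule prefix_closed_Diff_leaf[OF V v(2,3)])
  have "u \<in> V - {v}" using V v vua by (auto simp: prefix_closed_def)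
  then obtain i where i: "red (take i w) = u"
    using visits_verts_walk_edges w(2) verts_tree_edges[OF V'] by metis
  have "reduced v" "a \<in> X \<times> UNIV" using V v(1) vua by (auto simp: prefix_closed_def)
  let ?w = "take i w @ [a, inv_letter a] @ drop i w"
  have "?w \<in> lists (X \<times> UNIV)"
    using w(1) \<open>a \<in> X \<times> UNIV\<close> by (auto simp: inv_letter_def dest: in_set_takeD in_set_dropD)
  moreover have "walk_edges ?w = insert (parent_edge v) (tree_edges (V - {v}))"
    using walk_detour(2)[OF i, of a] \<open>reduced v\<close> w(2) vua by simp
  moreover have "insert (parent_edge v) (tree_edges (V - {v})) = tree_edges V"
    using v(1,2) by (auto simp: tree_edges_def)
  moreover have "red ?w = red w" "length ?w = length w + 2"
    using walk_detour(1,3)[OF i, of a] \<open>reduced v\<close> vua by simp_all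
  ultimately show ?thesis by (intro that[of ?w]) simp_all
qed

lemma walk_of_length:
  assumes "prefix_closed X V" "g \<in> V"
  shows "\<exists>w \<in> lists (X \<times> UNIV). walk_edges w = tree_edges V \<and> red w = g
      \<and> length w = length g + 2 * (card V - 1 - length g)"
  using assms
proof (induction "card V" arbitrary: V rule: less_induct)
  case less
  note V = less.prems(1) and g = less.prems(2)
  have rg: "reduced g" and fin: "finite V" and PV: "set (prefixes g) \<subseteq> V"
    using V g prefix_closed_prefixes[OF V g] by (auto simp: prefix_closed_def)
  show ?case
  proof (cases "V \<subseteq> set (prefixes g)")
    case True
    then have "V = set (prefixes g)" using PV by auto
    then show ?thesis
      using V g walk_edges_reduced[OF rg] red_reduced[OF rg]
      by (intro bexI[of _ g]) (auto simp: tree_edges_def prefix_closed_def)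
  next
    case False
    \<comment> \<open>walk around the tree without one leaf off the trunk, then detour to that leaf\<close>
    then obtain v where v: "v \<in> V" "\<not> prefix v g" "\<forall>u\<in>V. butlast u \<noteq> v"
      using leaf_off_trunk[OF V] by blast
    then have "v \<noteq> []" by auto
    have V': "prefix_closed X (V - {v})" by (rule prefix_closed_Diff_leaf[OF V \<open>v \<noteq> []\<close> v(3)])
    have card_V: "card V = Suc (card (V - {v}))" using card_Suc_Diff1[OF fin v(1)] by simp
    moreover have "g \<in> V - {v}" using g v(2) by auto
    ultimately obtain w where w: "w \<in> lists (X \<times> UNIV)" "walk_edges w = tree_edges (V - {v})"
      "red w = g" "length w = length g + 2 * (card (V - {v}) - 1 - length g)"
      using less.hyps[OF _ V'] by auto
    moreover have "Suc (length g) \<le> card (V - {v})"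
      using card_prefix_closed_ge[OF V' \<open>g \<in> V - {v}\<close>] .
    moreover obtain w' where "w' \<in> lists (X \<times> UNIV)" "walk_edges w' = tree_edges V"
      "red w' = red w" "length w' = length w + 2"
      using walk_add_leaf[OF V v(1) \<open>v \<noteq> []\<close> v(3) w(1,2)] .
    ultimately show ?thesis using card_V by (intro bexI[of _ w']) auto
  qed
qed

lemma fim_length_tree_edges:
  assumes "prefix_closed X V" "g \<in> V"
  shows "fim_length X (tree_edges V, g) = length g + 2 * (card V - 1 - length g)"
  unfolding fim_length_def munn_def
  using walk_of_length[OF assms] length_walk_ge[OF assms]
  by (intro Least_equality) auto

section \<open>Raney numbers count forests\<close>

lemma R_Suc_Suc:
  fixes p r k :: nat
  assumes "p \<ge> 1"
  shows "R p (Suc r) (Suc k) = R p r (Suc k) + R p (r + p) k"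
proof -
  define D where "D = Suc k * p + r"
  define c where "c = real (D choose k)"
  define d where "d = real D"
  define m where "m = real (Suc k)"
  have "Suc k \<le> Suc k * p" using mult_le_mono2[OF assms, of "Suc k"] by simp
  then have pos: "d > 0" "m > 0" unfolding d_def m_def D_def by linarith+
  have d: "d = m * real p + real r" by (simp add: d_def m_def D_def algebra_simps)
  have dens: "Suc k * p + Suc r = Suc D" "k * p + (r + p) = D" by (simp_all add: D_def)
  have Sk: "real (Suc D choose Suc k) = c * (d + 1) / m"
    using Suc_times_binomial_eq[of D k] pos(2) unfolding c_def d_def m_def
    by (simp add: field_simps flip: of_nat_mult)
  have Dk: "real (D choose Suc k) = c * (d + 1 - m) / m"
    using Sk binomial_Suc_Suc[of D k] pos(2) unfolding c_def d_def by (simp add: field_simps)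
  have "R p r (Suc k) + R p (r + p) k = real r / d * (c * (d + 1 - m) / m) + real (r + p) / d * c"
    unfolding R_def dens(2) D_def[symmetric] Dk c_def[symmetric] d_def[symmetric] ..
  also have "\<dots> = c * (real r * (d + 1 - m) + real (r + p) * m) / (d * m)"
    using pos by (simp add: field_simps)
  also have "real r * (d + 1 - m) + real (r + p) * m = d * (real r + 1)"
    using d by (simp add: algebra_simps)
  also have "c * (d * (real r + 1)) / (d * m) = (real r + 1) * c / m"
    using pos by simp
  also have "\<dots> = real (Suc r) / (d + 1) * (c * (d + 1) / m)"
    using pos by (simp add: add_pos_pos)
  also have "\<dots> = R p (Suc r) (Suc k)"
    unfolding R_def dens(1) Sk by (simp add: d_def ac_simps)
  finally show ?thesis ..
qed

fun raney :: "nat \<Rightarrow> nat \<Rightarrow> nat \<Rightarrow> nat" where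
  "raney p 0 0 = 1"
| "raney p 0 (Suc k) = 0"
| "raney p (Suc r) 0 = 1"
| "raney p (Suc r) (Suc k) = raney p r (Suc k) + raney p (r + p) k"

text \<open>The exception is forced by \<open>R p 0 0 = 0 / 0 = 0\<close>.\<close>
lemma raney_eq_R: "p \<ge> 1 \<Longrightarrow> real (raney p r k) = (if r = 0 \<and> k = 0 then 1 else R p r k)"
proof (induction p r k rule: raney.induct)
  case (4 p r k)
  then show ?case by (simp add: R_Suc_Suc)
qed (simp_all add: R_def)

definition children :: "'a set \<Rightarrow> 'a letter list \<Rightarrow> 'a letter list set" where
  "children X u = {c. reduced c \<and> c \<in> lists (X \<times> UNIV) \<and> c \<noteq> [] \<and> butlast c = u}"

lemma children_eq:
  assumes "reduced u" "u \<in> lists (X \<times> UNIV)"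
  shows "children X u = (\<lambda>b. u @ [b]) ` {b \<in> X \<times> UNIV. u = [] \<or> last u \<noteq> inv_letter b}"
proof (intro set_eqI iffI)
  fix c assume "c \<in> children X u"
  then have c: "reduced c" "c \<in> lists (X \<times> UNIV)" "c = u @ [last c]"
    by (auto simp: children_def)
  then have "last c \<in> X \<times> UNIV" "u = [] \<or> last u \<noteq> inv_letter (last c)"
    by (metis in_lists_conv_set in_set_conv_decomp, metis reduced_snoc)
  then show "c \<in> (\<lambda>b. u @ [b]) ` {b \<in> X \<times> UNIV. u = [] \<or> last u \<noteq> inv_letter b}"
    using c(3) by (intro image_eqI[of _ _ "last c"]) auto
qed (use assms in \<open>auto simp: children_def reduced_snoc\<close>)

lemma card_children:
  assumes X: "finite X" and u: "reduced u" "u \<in> lists (X \<times> UNIV)"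
  shows "finite (children X u)"
    and "card (children X u) = (if u = [] then 2 * card X else 2 * card X - 1)"
proof -
  let ?B = "{b \<in> X \<times> UNIV. u = [] \<or> last u \<noteq> inv_letter b}"
  have "card ?B = (if u = [] then 2 * card X else 2 * card X - 1)"
  proof (cases "u = []")
    case False
    then have "last u \<in> X \<times> UNIV" using u(2) by (auto dest: last_in_set)
    then have "?B = X \<times> UNIV - {inv_letter (last u)}" "inv_letter (last u) \<in> X \<times> UNIV"
      using False by (auto simp: inv_letter_def)
    then show ?thesis using False X by (simp add: card_cartesian_product)
  qed (simp add: X card_cartesian_product)
  moreover have "inj (\<lambda>b. u @ [b])" by (rule injI) simp
  ultimately show "finite (children X u)"
    and "card (children X u) = (if u = [] then 2 * card X else 2 * card X - 1)"
    unfolding children_eq[OF u] using X by (simp_all add: card_image inj_on_subset)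
qed

definition forest_on :: "'a set \<Rightarrow> 'a letter list set \<Rightarrow> 'a letter list set \<Rightarrow> bool" where
  "forest_on X S W \<longleftrightarrow> finite W \<and>
     (\<forall>w\<in>W. reduced w \<and> w \<in> lists (X \<times> UNIV) \<and> w \<noteq> [] \<and> (w \<in> S \<or> butlast w \<in> W))"

definition forests :: "'a set \<Rightarrow> 'a letter list set \<Rightarrow> nat \<Rightarrow> 'a letter list set set" where
  "forests X S k = {W. forest_on X S W \<and> card W = k}"

definition prefix_antichain :: "'a set \<Rightarrow> 'a letter list set \<Rightarrow> bool" where
  "prefix_antichain X S \<longleftrightarrow> finite S \<and> (\<forall>s\<in>S. reduced s \<and> s \<in> lists (X \<times> UNIV) \<and> s \<noteq> [])
     \<and> (\<forall>s\<in>S. \<forall>s'\<in>S. prefix s s' \<longrightarrow> s = s')"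

lemma forest_on_root:
  assumes "forest_on X S W" "w \<in> W"
  obtains s where "s \<in> S" "prefix s w"
  using assms(2)
proof (induction "length w" arbitrary: w rule: less_induct)
  case less
  then have "w \<noteq> []" "w \<in> S \<or> butlast w \<in> W" using assms(1) by (auto simp: forest_on_def)
  then show ?case
    using less prefixeq_butlast[of w] prefix_order.trans by (metis diff_less length_butlast
        length_greater_0_conv prefix_order.refl zero_less_one)
qed

lemma notin_forest_on: "forest_on X S W \<Longrightarrow> \<forall>s'\<in>S. \<not> prefix s' s \<Longrightarrow> s \<notin> W"
  using forest_on_root by blast

lemma forest_on_mono: "forest_on X S W \<Longrightarrow> S \<subseteq> S' \<Longrightarrow> forest_on X S' W"
  unfolding forest_on_def by blast

lemma forest_on_Diff_root:
  "forest_on X S W \<Longrightarrow> s \<notin> W \<Longrightarrow> forest_on X (S - {s}) W"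
  unfolding forest_on_def by blast

lemma forest_on_Diff_root_children:
  "forest_on X S W \<Longrightarrow> s \<in> W \<Longrightarrow> forest_on X (S - {s} \<union> children X s) (W - {s})"
  unfolding forest_on_def children_def by blast

lemma forest_on_insert_root:
  assumes "forest_on X (S - {s} \<union> children X s) W" "s \<in> S"
    and "reduced s" "s \<in> lists (X \<times> UNIV)" "s \<noteq> []"
  shows "forest_on X S (insert s W)"
  using assms unfolding forest_on_def children_def by blast

lemma prefix_antichain_Diff: "prefix_antichain X S \<Longrightarrow> prefix_antichain X (S - {s})"
  unfolding prefix_antichain_def by blast

lemma length_children: "c \<in> children X s \<Longrightarrow> length c = Suc (length s)"
  unfolding children_def by (cases c rule: rev_cases) auto

lemma root_notin_forest_on_Diff:
  "prefix_antichain X S \<Longrightarrow> s \<in> S \<Longrightarrow> forest_on X (S - {s}) W \<Longrightarrow> s \<notin> W"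
  by (rule notin_forest_on) (auto simp: prefix_antichain_def)

lemma root_notin_forest_on_children:
  assumes "prefix_antichain X S" "s \<in> S" "forest_on X (S - {s} \<union> children X s) W"
  shows "s \<notin> W"
  using assms(3)
proof (rule notin_forest_on)
  show "\<forall>s'\<in>S - {s} \<union> children X s. \<not> prefix s' s"
    using assms(1,2) length_children prefix_length_le
    by (fastforce simp: prefix_antichain_def)
qed

lemma prefix_antichain_children:
  assumes X: "finite X" and S: "prefix_antichain X S" and s: "s \<in> S"
  shows "prefix_antichain X (S - {s} \<union> children X s)"
proof -
  have s': "reduced s" "s \<in> lists (X \<times> UNIV)"
    and anti: "\<And>a b. a \<in> S \<Longrightarrow> b \<in> S \<Longrightarrow> prefix a b \<Longrightarrow> a = b"
    using S s by (auto simp: prefix_antichain_def)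
  have child: "butlast c = s" "length c = Suc (length s)" "prefix s c" if "c \<in> children X s" for c
    using that length_children[OF that] prefixeq_butlast[of c] by (auto simp: children_def)
  have incomparable: "a = b"
    if ab: "a \<in> S - {s} \<union> children X s" "b \<in> S - {s} \<union> children X s" "prefix a b" for a b
  proof -
    consider "a \<in> S - {s}" "b \<in> S - {s}" | "a \<in> children X s" "b \<in> children X s"
      | "a \<in> children X s" "b \<in> S - {s}" | "a \<in> S - {s}" "b \<in> children X s"
      using ab(1,2) by blast
    then show ?thesis
    proof cases
      case 1
      then show ?thesis using anti ab(3) by blast
    next
      case 2
      then show ?thesis using ab(3) child(2) prefix_length_eq by metis
    next
      case 3
      then show ?thesis using anti[OF s, of b] child[of a] ab(3) prefix_order.trans by auto
    next
      case 4
      then show ?thesis using anti[OF _ s, of a] child(1)[of b] prefix_butlast_if_neq[OF ab(3)] by auto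
    qed
  qed
  show ?thesis
    unfolding prefix_antichain_def
  proof (intro conjI)
    show "finite (S - {s} \<union> children X s)"
      using S card_children(1)[OF X s'] by (simp add: prefix_antichain_def)
    show "\<forall>x\<in>S - {s} \<union> children X s. reduced x \<and> x \<in> lists (X \<times> UNIV) \<and> x \<noteq> []"
      using S by (auto simp: prefix_antichain_def children_def)
  qed (use incomparable in blast)
qed

lemma card_Diff_Un_children:
  assumes X: "finite X" and S: "prefix_antichain X S" and s: "s \<in> S"
  shows "card (S - {s} \<union> children X s) = card S - 1 + (2 * card X - 1)"
proof -
  have s': "reduced s" "s \<in> lists (X \<times> UNIV)" "s \<noteq> []" and "finite S"
    using S s by (auto simp: prefix_antichain_def)
  have "c \<notin> S" if "c \<in> children X s" for c
  proof
    assume "c \<in> S"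
    moreover have "prefix s c" using that prefixeq_butlast[of c] by (auto simp: children_def)
    ultimately have "s = c" using S s by (auto simp: prefix_antichain_def)
    then show False using length_children[OF that] by simp
  qed
  then show ?thesis
    using card_Un_disjoint[of "S - {s}" "children X s"] card_children[OF X s'(1,2)]
      \<open>finite S\<close> s s'(3) by auto
qed

lemma forests_Suc:
  assumes S: "prefix_antichain X S" and s: "s \<in> S"
  shows "forests X S (Suc k) =
    forests X (S - {s}) (Suc k) \<union> insert s ` forests X (S - {s} \<union> children X s) k"
proof (intro set_eqI iffI)
  fix W assume W: "W \<in> forests X S (Suc k)"
  then have "finite W" by (simp add: forests_def forest_on_def)
  show "W \<in> forests X (S - {s}) (Suc k) \<union> insert s ` forests X (S - {s} \<union> children X s) k"
  proof (cases "s \<in> W")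
    case True
    then have "W - {s} \<in> forests X (S - {s} \<union> children X s) k" "W = insert s (W - {s})"
      using W \<open>finite W\<close> forest_on_Diff_root_children[of X S W s] by (auto simp: forests_def)
    then show ?thesis by (intro UnI2 image_eqI)
  next
    case False
    then show ?thesis using W forest_on_Diff_root[of X S W s] unfolding forests_def by blast
  qed
next
  fix W assume "W \<in> forests X (S - {s}) (Suc k) \<union> insert s ` forests X (S - {s} \<union> children X s) k"
  then consider "W \<in> forests X (S - {s}) (Suc k)"
    | W' where "W' \<in> forests X (S - {s} \<union> children X s) k" "W = insert s W'" by blast
  then show "W \<in> forests X S (Suc k)"
  proof cases
    case 1
    then show ?thesis using forest_on_mono[of X "S - {s}" W S] by (simp add: forests_def)
  next
    case 2
    have "s \<notin> W'" using 2 root_notin_forest_on_children[OF S s] by (simp add: forests_def)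
    moreover have "finite W'" using 2 by (simp add: forests_def forest_on_def)
    moreover have "forest_on X S W"
      using 2 S s forest_on_insert_root[of X S s W'] by (simp add: forests_def prefix_antichain_def)
    ultimately show ?thesis using 2 by (simp add: forests_def)
  qed
qed

lemma card_forests:
  assumes X: "finite X" and p: "p = 2 * card X - 1" and S: "prefix_antichain X S"
  shows "finite (forests X S k) \<and> card (forests X S k) = raney p (card S) k"
  using S
proof (induction k arbitrary: S)
  case 0
  have "forests X S 0 = {{}}" by (auto simp: forests_def forest_on_def)
  then show ?case by (cases "card S") simp_all
next
  case (Suc k)
  show ?case
    using Suc.prems
  proof (induction "card S" arbitrary: S)
    case 0
    then have "forests X S (Suc k) = {}"
      using forest_on_root by (fastforce simp: forests_def prefix_antichain_def card_Suc_eq)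
    then show ?case using 0 by simp
  next
    case (Suc r S)
    then obtain s where s: "s \<in> S" by force
    let ?A1 = "forests X (S - {s}) (Suc k)" and ?A2 = "forests X (S - {s} \<union> children X s) k"
    have "finite S" using Suc.prems by (simp add: prefix_antichain_def)
    then have "card (S - {s}) = r" using Suc.hyps(2) s by simp
    then have A1: "finite ?A1 \<and> card ?A1 = raney p r (Suc k)"
      using Suc.hyps(1)[of "S - {s}"] prefix_antichain_Diff[OF Suc.prems] by simp
    have "card (S - {s} \<union> children X s) = r + p"
      using card_Diff_Un_children[OF X Suc.prems s] Suc.hyps(2) p by simp
    then have A2: "finite ?A2 \<and> card ?A2 = raney p (r + p) k"
      using Suc.IH[OF prefix_antichain_children[OF X Suc.prems s]] by simp
    have "s \<notin> W" if "W \<in> ?A2" for W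
      using that root_notin_forest_on_children[OF Suc.prems s] by (simp add: forests_def)
    then have "inj_on (insert s) ?A2"
      by (intro inj_onI) (metis insert_ident)
    moreover have "?A1 \<inter> insert s ` ?A2 = {}"
      using root_notin_forest_on_Diff[OF Suc.prems s] by (force simp: forests_def)
    ultimately show ?case
      using A1 A2 forests_Suc[OF Suc.prems s] Suc.hyps(2)[symmetric]
      by (simp add: card_Un_disjoint card_image)
  qed
qed

section \<open>Counting elements of given trunk and branch size\<close>

definition reduced_words :: "'a set \<Rightarrow> nat \<Rightarrow> 'a letter list set" where
  "reduced_words X t = {g. reduced g \<and> g \<in> lists (X \<times> UNIV) \<and> length g = t}"

lemma reduced_words_Suc: "reduced_words X (Suc t) = (\<Union>u\<in>reduced_words X t. children X u)"
proof (intro set_eqI iffI)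
  fix c assume "c \<in> reduced_words X (Suc t)"
  then have "c \<in> children X (butlast c)" "butlast c \<in> reduced_words X t"
    by (auto simp: reduced_words_def children_def reduced_butlast dest: in_set_butlastD)
  then show "c \<in> (\<Union>u\<in>reduced_words X t. children X u)" by blast
qed (auto simp: reduced_words_def children_def)

lemma card_reduced_words:
  assumes X: "finite X"
  shows "finite (reduced_words X t)
    \<and> card (reduced_words X t) = (if t = 0 then 1 else 2 * card X * (2 * card X - 1) ^ (t - 1))"
proof (induction t)
  case 0
  have "reduced_words X 0 = {[]}" by (auto simp: reduced_words_def)
  then show ?case by simp
next
  case (Suc t)
  have u: "reduced u" "u \<in> lists (X \<times> UNIV)" "u = [] \<longleftrightarrow> t = 0" if "u \<in> reduced_words X t" for u
    using that by (auto simp: reduced_words_def)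
  have "card (reduced_words X (Suc t)) = (\<Sum>u\<in>reduced_words X t. card (children X u))"
    unfolding reduced_words_Suc using Suc.IH card_children(1)[OF X u(1,2)]
    by (intro card_UN_disjoint) (auto simp: children_def)
  also have "\<dots> = card (reduced_words X t) * (if t = 0 then 2 * card X else 2 * card X - 1)"
    using card_children(2)[OF X u(1,2)] u(3) by simp
  moreover have "finite (reduced_words X (Suc t))"
    unfolding reduced_words_Suc using Suc.IH card_children(1)[OF X u(1,2)] by blast
  ultimately show ?case using Suc.IH by (cases t) auto
qed

definition trunk_slots :: "'a set \<Rightarrow> 'a letter list \<Rightarrow> 'a letter list set" where
  "trunk_slots X g =
    {c. reduced c \<and> c \<in> lists (X \<times> UNIV) \<and> c \<noteq> [] \<and> prefix (butlast c) g \<and> \<not> prefix c g}"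

lemma children_prefixes_eq:
  assumes "reduced g" "g \<in> lists (X \<times> UNIV)"
  shows "(\<Union>u\<in>set (prefixes g). children X u) = trunk_slots X g \<union> (set (prefixes g) - {[]})"
proof (intro set_eqI iffI)
  fix c assume "c \<in> trunk_slots X g \<union> (set (prefixes g) - {[]})"
  moreover have "c \<in> children X (butlast c)" if "prefix c g" "c \<noteq> []"
    using that assms reduced_prefix set_mono_prefix[OF that(1)]
    by (auto simp: children_def)
  ultimately show "c \<in> (\<Union>u\<in>set (prefixes g). children X u)"
    using prefixeq_butlast prefix_order.trans
    by (auto simp: trunk_slots_def children_def) blast
qed (auto simp: trunk_slots_def children_def)

lemma card_trunk_slots:
  assumes X: "finite X" and g: "g \<in> reduced_words X t"
  shows "finite (trunk_slots X g)" "card (trunk_slots X g) = 2 * card X + t * (2 * card X - 2)"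
proof -
  have rg: "reduced g" "g \<in> lists (X \<times> UNIV)" "length g = t" using g by (auto simp: reduced_words_def)
  have u: "reduced u" "u \<in> lists (X \<times> UNIV)" if "u \<in> set (prefixes g)" for u
    using that rg(1) reduced_prefix prefix_in_lists[OF _ rg(2)] by auto
  let ?U = "\<Union>u\<in>set (prefixes g). children X u"
  have "card ?U = (\<Sum>u\<in>set (prefixes g). card (children X u))"
    using card_children(1)[OF X u] by (intro card_UN_disjoint) (auto simp: children_def)
  also have "\<dots> = (\<Sum>u\<in>set (prefixes g). if u = [] then 2 * card X else 2 * card X - 1)"
    using card_children(2)[OF X u] by simp
  also have "\<dots> = 2 * card X + t * (2 * card X - 1)"
    using rg(3) by (simp add: sum.remove[of _ "[]"])
  finally have card_U: "card ?U = 2 * card X + t * (2 * card X - 1)" .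
  have fin_U: "finite ?U" using card_children(1)[OF X u] by simp
  then show fin: "finite (trunk_slots X g)" using children_prefixes_eq[OF rg(1,2)] by simp
  have "card ?U = card (trunk_slots X g) + t"
    unfolding children_prefixes_eq[OF rg(1,2)] using fin rg(3)
    by (subst card_Un_disjoint) (auto simp: trunk_slots_def)
  then show "card (trunk_slots X g) = 2 * card X + t * (2 * card X - 2)"
    using card_U by (cases "card X") (simp_all add: algebra_simps)
qed

lemma prefix_antichain_trunk_slots:
  assumes X: "finite X" and g: "g \<in> reduced_words X t"
  shows "prefix_antichain X (trunk_slots X g)"
proof -
  have "s = s'" if "s \<in> trunk_slots X g" "s' \<in> trunk_slots X g" "prefix s s'" for s s'
  proof (rule ccontr)
    assume "s \<noteq> s'"
    then have "prefix s (butlast s')" using that(3) prefix_butlast_if_neq by blast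
    then show False using that(1,2) prefix_order.trans by (auto simp: trunk_slots_def)
  qed
  then show ?thesis
    using card_trunk_slots(1)[OF assms] by (auto simp: prefix_antichain_def trunk_slots_def)
qed

lemma forest_on_trunk_slots_disjoint:
  assumes "forest_on X (trunk_slots X g) W"
  shows "W \<inter> set (prefixes g) = {}"
proof -
  have "\<not> prefix w g" if w: "w \<in> W" for w
  proof -
    obtain s where "s \<in> trunk_slots X g" "prefix s w" using forest_on_root[OF assms w] .
    then show ?thesis using prefix_order.trans by (auto simp: trunk_slots_def)
  qed
  then show ?thesis by auto
qed

lemma forest_on_trunk_slots_Diff:
  assumes V: "prefix_closed X V" and g: "g \<in> V"
  shows "forest_on X (trunk_slots X g) (V - set (prefixes g))"
  using V unfolding forest_on_def prefix_closed_def trunk_slots_def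
  by auto

lemma prefix_closed_Un_prefixes:
  assumes g: "reduced g" "g \<in> lists (X \<times> UNIV)" and W: "forest_on X (trunk_slots X g) W"
  shows "prefix_closed X (W \<union> set (prefixes g))"
proof -
  have "reduced v \<and> v \<in> lists (X \<times> UNIV) \<and> butlast v \<in> W \<union> set (prefixes g)"
    if "v \<in> W \<union> set (prefixes g)" for v
  proof (cases "v \<in> W")
    case True
    then show ?thesis using W by (auto simp: forest_on_def trunk_slots_def)
  next
    case False
    then have "prefix v g" using that by simp
    moreover have "prefix (butlast v) g" using \<open>prefix v g\<close> prefixeq_butlast prefix_order.trans by blast
    ultimately show ?thesis using reduced_prefix[OF g(1)] prefix_in_lists[OF _ g(2)] by simp
  qed
  then show ?thesis using W by (auto simp: prefix_closed_def forest_on_def)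
qed

lemma prefix_closed_containing_eq:
  assumes g: "g \<in> reduced_words X t"
  shows "{V. prefix_closed X V \<and> g \<in> V \<and> card V = Suc (t + k)}
    = (\<lambda>W. W \<union> set (prefixes g)) ` forests X (trunk_slots X g) k"
proof (intro set_eqI iffI)
  have rg: "reduced g" "g \<in> lists (X \<times> UNIV)" "length g = t" using g by (auto simp: reduced_words_def)
  fix V assume "V \<in> {V. prefix_closed X V \<and> g \<in> V \<and> card V = Suc (t + k)}"
  then have V: "prefix_closed X V" "g \<in> V" "card V = Suc (t + k)" by auto
  have sub: "set (prefixes g) \<subseteq> V" by (rule prefix_closed_prefixes[OF V(1,2)])
  moreover have "finite V" using V(1) by (simp add: prefix_closed_def)
  ultimately have "V - set (prefixes g) \<in> forests X (trunk_slots X g) k"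
    using forest_on_trunk_slots_Diff[OF V(1,2)] V(3) rg(3) by (simp add: forests_def card_Diff_subset)
  moreover have "V = (V - set (prefixes g)) \<union> set (prefixes g)" using sub by blast
  ultimately show "V \<in> (\<lambda>W. W \<union> set (prefixes g)) ` forests X (trunk_slots X g) k" by blast
next
  have rg: "reduced g" "g \<in> lists (X \<times> UNIV)" "length g = t" using g by (auto simp: reduced_words_def)
  fix V assume "V \<in> (\<lambda>W. W \<union> set (prefixes g)) ` forests X (trunk_slots X g) k"
  then obtain W where W: "forest_on X (trunk_slots X g) W" "card W = k" "V = W \<union> set (prefixes g)"
    by (auto simp: forests_def)
  then have "card V = card W + card (set (prefixes g))"
    using forest_on_trunk_slots_disjoint[OF W(1)] by (simp add: card_Un_disjoint forest_on_def)
  then show "V \<in> {V. prefix_closed X V \<and> g \<in> V \<and> card V = Suc (t + k)}"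
    using prefix_closed_Un_prefixes[OF rg(1,2) W(1)] W rg(3) by simp
qed

lemma inj_on_Un_prefixes: "inj_on (\<lambda>W. W \<union> set (prefixes g)) (forests X (trunk_slots X g) k)"
  using forest_on_trunk_slots_disjoint by (fastforce simp: forests_def inj_on_def)

lemma card_prefix_closed_containing:
  assumes X: "finite X" and p: "p = 2 * card X - 1" and g: "g \<in> reduced_words X t"
  shows "finite {V. prefix_closed X V \<and> g \<in> V \<and> card V = Suc (t + k)}"
    and "card {V. prefix_closed X V \<and> g \<in> V \<and> card V = Suc (t + k)}
      = raney p (2 * card X + t * (2 * card X - 2)) k"
  using card_forests[OF X p prefix_antichain_trunk_slots[OF X g], of k]
    card_trunk_slots(2)[OF X g]
  unfolding prefix_closed_containing_eq[OF g] by (simp_all add: card_image inj_on_Un_prefixes)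

lemma M_eq_image:
  "M X t k = (\<lambda>(g, V). (tree_edges V, g)) `
     (SIGMA g:reduced_words X t. {V. prefix_closed X V \<and> g \<in> V \<and> card V = Suc (t + k)})"
proof (intro set_eqI iffI)
  fix m assume m: "m \<in> M X t k"
  then obtain V g where V: "prefix_closed X V" "g \<in> V" "m = (tree_edges V, g)"
    unfolding M_def FIM_eq_image_tree_edges by auto
  then have "length g = t" "card V = Suc (t + k)"
    using m card_trunk[OF V(1,2)] card_prefix_closed_ge[OF V(1,2)] by (auto simp: M_def)
  then show "m \<in> (\<lambda>(g, V). (tree_edges V, g)) `
     (SIGMA g:reduced_words X t. {V. prefix_closed X V \<and> g \<in> V \<and> card V = Suc (t + k)})"
    using V by (force simp: reduced_words_def prefix_closed_def)
qed (auto simp: M_def reduced_words_def card_trunk tree_edges_in_FIM)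

lemma card_M:
  assumes X: "finite X" and p: "p = 2 * card X - 1"
  shows "finite (M X t k)"
    and "card (M X t k) = card (reduced_words X t) * raney p (2 * card X + t * (2 * card X - 2)) k"
proof -
  let ?S = "SIGMA g:reduced_words X t. {V. prefix_closed X V \<and> g \<in> V \<and> card V = Suc (t + k)}"
  have fin: "finite ?S"
    using card_reduced_words[OF X] card_prefix_closed_containing(1)[OF X p] by blast
  then show "finite (M X t k)" unfolding M_eq_image by simp
  have "inj_on (\<lambda>(g, V). (tree_edges V, g)) ?S"
    using inj_on_tree_edges[of X] by (auto simp: inj_on_def)
  then have "card (M X t k) = card ?S" unfolding M_eq_image by (rule card_image)
  also have "\<dots> = card (reduced_words X t) * raney p (2 * card X + t * (2 * card X - 2)) k"
    using card_reduced_words[OF X] card_prefix_closed_containing[OF X p]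
    by (simp add: card_SigmaI)
  finally show "card (M X t k) = card (reduced_words X t) * raney p (2 * card X + t * (2 * card X - 2)) k" .
qed

lemma sphere_eq_UN: "sphere X K = (\<Union>k\<le>K div 2. M X (K - 2 * k) k)"
proof (intro set_eqI iffI)
  fix m assume m: "m \<in> sphere X K"
  then obtain V g where V: "prefix_closed X V" "g \<in> V" "m = (tree_edges V, g)"
    unfolding sphere_def FIM_eq_image_tree_edges by auto
  define k where "k = card V - 1 - length g"
  have "K = length g + 2 * k"
    using m fim_length_tree_edges[OF V(1,2)] V(3) by (simp add: sphere_def k_def)
  then show "m \<in> (\<Union>k\<le>K div 2. M X (K - 2 * k) k)"
    using m V card_trunk[OF V(1,2)] by (auto simp: M_def sphere_def k_def)
next
  fix m assume "m \<in> (\<Union>k\<le>K div 2. M X (K - 2 * k) k)"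
  then obtain k where k: "k \<le> K div 2" "m \<in> M X (K - 2 * k) k" by auto
  then obtain V g where V: "prefix_closed X V" "g \<in> V" "m = (tree_edges V, g)"
    unfolding M_def FIM_eq_image_tree_edges by auto
  then have "card (trunk (tree_edges V) g) = K - 2 * k"
    "card (tree_edges V - trunk (tree_edges V) g) = k"
    using k by (auto simp: M_def)
  then have "length g = K - 2 * k" "card V - 1 - length g = k"
    using card_trunk[OF V(1,2)] by auto
  then show "m \<in> sphere X K"
    using k V fim_length_tree_edges[OF V(1,2)] by (auto simp: M_def sphere_def)
qed

lemma card_sphere:
  assumes "finite X" "p = 2 * card X - 1"
  shows "card (sphere X K) = (\<Sum>k\<le>K div 2. card (M X (K - 2 * k) k))"
  unfolding sphere_eq_UN using card_M(1)[OF assms]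
  by (intro card_UN_disjoint) (auto simp: M_def)

lemma card_M_nonempty_trunk:
  assumes X: "finite X" "X \<noteq> {}" and p: "p = 2 * card X - 1" and t: "t \<ge> 1"
  shows "real (card (M X t k)) = real (p + 1) * real p ^ (t - 1) * R p (2 * p + (t - 1) * (p - 1)) k"
proof -
  obtain n where n: "card X = Suc n" using X by (metis card_0_eq not0_implies_Suc)
  obtain t' where t': "t = Suc t'" using t by (cases t) auto
  have "card (reduced_words X t) = (p + 1) * p ^ (t - 1)"
    using card_reduced_words[OF X(1), of t] n t' p by simp
  moreover have "2 * card X + t * (2 * card X - 2) = 2 * p + (t - 1) * (p - 1)"
    using n t' p by (simp add: algebra_simps)
  ultimately have "card (M X t k) = (p + 1) * p ^ (t - 1) * raney p (2 * p + (t - 1) * (p - 1)) k"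
    using card_M(2)[OF X(1) p] by simp
  moreover have "real (raney p (2 * p + (t - 1) * (p - 1)) k) = R p (2 * p + (t - 1) * (p - 1)) k"
    using raney_eq_R[of p] n p by simp
  ultimately show ?thesis by (simp only: of_nat_mult of_nat_power)
qed

lemma card_M_empty_trunk:
  assumes X: "finite X" "X \<noteq> {}" and p: "p = 2 * card X - 1"
  shows "real (card (M X 0 k)) = real (p + 1) / real (k * p + p + 1) * real ((k * p + p + 1) choose k)"
proof -
  obtain n where n: "card X = Suc n" using X by (metis card_0_eq not0_implies_Suc)
  have "card (M X 0 k) = raney p (p + 1) k"
    using card_M(2)[OF X(1) p, of 0 k] card_reduced_words[OF X(1), of 0] p n by simp
  moreover have "real (raney p (p + 1) k) = R p (p + 1) k" using raney_eq_R[of p] p n by simp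
  ultimately show ?thesis by (simp add: R_def add.assoc)
qed

lemma sum_atMost_half:
  fixes f :: "nat \<Rightarrow> 'a::comm_monoid_add"
  shows "(\<Sum>k\<le>K div 2. f k) = (if even K then f (K div 2) else 0) + (\<Sum>k | 2 * k < K. f k)"
proof -
  have "{..K div 2} = (if even K then insert (K div 2) {k. 2 * k < K} else {k. 2 * k < K})"
    by auto presburger+
  moreover have "finite {k. 2 * k < K}" by (rule finite_subset[of _ "{..K}"]) auto
  ultimately show ?thesis by (simp add: add.commute)
qed

lemma card_sphere_eq:
  assumes "finite X" "X \<noteq> {}" "p = 2 * card X - 1"
  shows "real (card (sphere X K)) =
            (if even K then real (p + 1) / real ((K div 2) * p + p + 1)
                             * real (((K div 2) * p + p + 1) choose (K div 2)) else 0)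
            + (\<Sum>k \<in> {k. 2 * k < K}. real (p + 1) * real p ^ (K - 2 * k - 1)
                 * (real (2 * p + (K - 2 * k - 1) * (p - 1))
                    / real (k * p + 2 * p + (K - 2 * k - 1) * (p - 1)))
                 * real ((k * p + 2 * p + (K - 2 * k - 1) * (p - 1)) choose k))"
proof -
  have "real (card (M X (K - 2 * k) k)) = real (p + 1) * real p ^ (K - 2 * k - 1)
      * (real (2 * p + (K - 2 * k - 1) * (p - 1)) / real (k * p + 2 * p + (K - 2 * k - 1) * (p - 1)))
      * real ((k * p + 2 * p + (K - 2 * k - 1) * (p - 1)) choose k)" if "2 * k < K" for k
    using card_M_nonempty_trunk[OF assms, of "K - 2 * k" k] that
    by (simp only: R_def add.assoc mult.assoc)
  moreover have "real (card (M X (K - 2 * (K div 2)) (K div 2)))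
      = real (p + 1) / real ((K div 2) * p + p + 1) * real (((K div 2) * p + p + 1) choose (K div 2))"
    if "even K"
    using card_M_empty_trunk[OF assms] that by simp
  ultimately show ?thesis
    using card_sphere[OF assms(1,3), of K] sum_atMost_half[of "\<lambda>k. real (card (M X (K - 2 * k) k))" K]
    by simp
qed

theorem mainTheorem4:
  fixes X :: "'a set" and p :: nat
  assumes "finite X" and "X \<noteq> {}" and "p = 2 * card X - 1"
  shows "(\<forall>t k. t \<ge> 1 \<longrightarrow>
            real (card (M X t k)) = real (p + 1) * real p ^ (t - 1) * R p (2 * p + (t - 1) * (p - 1)) k)
       \<and> (\<forall>k. real (card (M X 0 k)) =
            real (p + 1) / real (k * p + p + 1) * real ((k * p + p + 1) choose k))
       \<and> (\<forall>K. real (card (sphere X K)) =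
            (if even K then real (p + 1) / real ((K div 2) * p + p + 1)
                             * real (((K div 2) * p + p + 1) choose (K div 2)) else 0)
            + (\<Sum>k \<in> {k. 2 * k < K}. real (p + 1) * real p ^ (K - 2 * k - 1)
                 * (real (2 * p + (K - 2 * k - 1) * (p - 1))
                    / real (k * p + 2 * p + (K - 2 * k - 1) * (p - 1)))
                 * real ((k * p + 2 * p + (K - 2 * k - 1) * (p - 1)) choose k)))"
  using card_M_nonempty_trunk[OF assms] card_M_empty_trunk[OF assms] card_sphere_eq[OF assms]
  by blast


end
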